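(* Consider the following game with parameters $N\ge 1$, integer $b\ge 1$ and $k>0$: initially there are $N$ empty bins; in each round Player I first removes a bin of largest size (number of balls) among the remaining bins, and then Player II adds at most $b$ balls in total to the remaining bins. Suppose that at some time $t_1$ some remaining bin $B_1$ contains at least $k$ balls. Let $B_2,B_3,\dots,B_r$ be the bins removed by Player I before time $t_1$, listed in reverse order of removal, with $B_i$ removed at time $t_i$ (so $t_1>t_2>t_3>\dots$). Then for every $i\ge 1$, at time $t_i$ (sizes taken just before Player I's removal at that time, for $i\ge 2$) we have $$|B_i|\ \ge\ k-\sum_{\ell=1}^{i-1}\frac{b}{\ell}\qquad\text{and}\qquad \sum_{\ell=1}^{i}|B_\ell|\ \ge\ i\cdot\Big(k-\sum_{\ell=1}^{i-1}\frac{b}{\ell}\Big),$$ where $|B|$ denotes the number of balls in bin $B$.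
   Context: Between two consecutive removals by Player I, Player II adds at most $b$ balls in total. *)

theory Defs
  imports Complex_Main
begin

text \<open>Round t (t < N): Player I removes bin rem t, then Player II
adds balls. load t j is the number of balls in bin j at time t, i.e. just before
Player I's removal in round t (time 0 = initial configuration).\<close>

definition alive :: "nat \<Rightarrow> (nat \<Rightarrow> nat) \<Rightarrow> nat \<Rightarrow> nat set" where
  "alive N rem t = {0..<N} - rem ` {..<t}"

definition valid_play :: "nat \<Rightarrow> nat \<Rightarrow> (nat \<Rightarrow> nat) \<Rightarrow> (nat \<Rightarrow> nat \<Rightarrow> nat) \<Rightarrow> bool" where
  "valid_play N b rem load \<longleftrightarrow>
     (\<forall>j. load 0 j = 0) \<and>
     (\<forall>t<N. rem t \<in> alive N rem t \<and> (\<forall>j\<in>alive N rem t. load t j \<le> load t (rem t))) \<and>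
     (\<forall>t<N. \<forall>j. load t j \<le> load (Suc t) j) \<and>
     (\<forall>t<N. \<forall>j. j \<notin> alive N rem (Suc t) \<longrightarrow> load (Suc t) j = load t j) \<and>
     (\<forall>t<N. (\<Sum>j\<in>alive N rem (Suc t). load (Suc t) j - load t j) \<le> b)"

text \<open>B_1 = B1, and B_i (i \<ge> 2) is the bin removed in round t1 + 1 - i,
i.e. the bins removed before time t1 in reverse order; B_i is removed at time t1 + 1 - i.\<close>

definition rev_bin :: "nat \<Rightarrow> nat \<Rightarrow> (nat \<Rightarrow> nat) \<Rightarrow> nat \<Rightarrow> nat" where
  "rev_bin t1 B1 rem i = (if i = 1 then B1 else rem (t1 + 1 - i))"

end

theory Submission
  imports Defs
begin

text \<open>Let \<open>S\<^sub>i(t)\<close> be the total load of \<open>B\<^sub>1, \<dots>, B\<^sub>i\<close> at time \<open>t\<close>. Going back one round, from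
the time \<open>B\<^sub>i\<close> is removed to the time \<open>B\<^sub>i\<^sub>+\<^sub>1\<close> is removed, these \<open>i\<close> distinct alive bins lose at most
\<open>b\<close> balls in total, while \<open>B\<^sub>i\<^sub>+\<^sub>1\<close>, being a largest bin, carries at least their average load.
Hence \<open>i |B\<^sub>i\<^sub>+\<^sub>1| \<ge> S\<^sub>i \<ge> i K\<^sub>i - b\<close>, i.e. \<open>|B\<^sub>i\<^sub>+\<^sub>1| \<ge> K\<^sub>i - b/i = K\<^sub>i\<^sub>+\<^sub>1\<close>, and adding \<open>B\<^sub>i\<^sub>+\<^sub>1\<close> to the
sum gives \<open>S\<^sub>i\<^sub>+\<^sub>1 \<ge> (i+1) K\<^sub>i\<^sub>+\<^sub>1\<close>.\<close>

lemma alive_antimono: "s \<le> t \<Longrightarrow> alive N rem t \<subseteq> alive N rem s"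
  unfolding alive_def by auto

lemma finite_alive: "finite (alive N rem t)"
  unfolding alive_def by simp

lemma averaging_step:
  fixes S S' x K b :: real and i :: nat
  assumes "i > 0" and "S' \<le> S + b" and "real i * K \<le> S'" and "S \<le> real i * x"
  shows "K - b / real i \<le> x" and "real (Suc i) * (K - b / real i) \<le> S + x"
proof -
  have "real i * (K - b / real i) = real i * K - b"
    using assms(1) by (simp add: right_diff_distrib)
  then have lower: "real i * (K - b / real i) \<le> S"
    using assms(2,3) by linarith
  then have "real i * (K - b / real i) \<le> real i * x"
    using assms(4) by linarith
  then show x: "K - b / real i \<le> x"
    by (rule mult_left_le_imp_le) (use assms(1) in simp)
  show "real (Suc i) * (K - b / real i) \<le> S + x"
    using lower x by (simp add: distrib_right)
qed

context
  fixes N b :: nat and rem :: "nat \<Rightarrow> nat" and load :: "nat \<Rightarrow> nat \<Rightarrow> nat"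
  assumes play: "valid_play N b rem load"
begin

lemma sum_load_Suc_le:
  assumes "t < N" and "J \<subseteq> alive N rem (Suc t)"
  shows "(\<Sum>j\<in>J. load (Suc t) j) \<le> (\<Sum>j\<in>J. load t j) + b"
proof -
  have grow: "load t j \<le> load (Suc t) j" for j
    using play assms(1) unfolding valid_play_def by blast
  have "(\<Sum>j\<in>J. load (Suc t) j) = (\<Sum>j\<in>J. load (Suc t) j - load t j) + (\<Sum>j\<in>J. load t j)"
    by (simp add: sum.distrib[symmetric] grow)
  also have "(\<Sum>j\<in>J. load (Suc t) j - load t j)
      \<le> (\<Sum>j\<in>alive N rem (Suc t). load (Suc t) j - load t j)"
    by (rule sum_mono2[OF finite_alive assms(2)]) simp
  also have "\<dots> \<le> b"
    using play assms(1) unfolding valid_play_def by blast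
  finally show ?thesis by simp
qed

lemma sum_load_le_removed:
  assumes "t < N" and "J \<subseteq> alive N rem t"
  shows "(\<Sum>j\<in>J. load t j) \<le> card J * load t (rem t)"
proof -
  have "(\<Sum>j\<in>J. load t j) \<le> (\<Sum>j\<in>J. load t (rem t))"
    using play assms unfolding valid_play_def by (intro sum_mono) blast
  then show ?thesis by simp
qed

context
  fixes t1 B1 :: nat
  assumes t1_le: "t1 \<le> N" and B1_alive: "B1 \<in> alive N rem t1"
begin

lemma rev_bin_alive:
  assumes "1 \<le> l" and "l \<le> t1 + 1" and "s \<le> t1 + 1 - l"
  shows "rev_bin t1 B1 rem l \<in> alive N rem s"
proof -
  have "rev_bin t1 B1 rem l \<in> alive N rem (t1 + 1 - l)"
  proof (cases "l = 1")
    case True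
    then show ?thesis using B1_alive by (simp add: rev_bin_def)
  next
    case False
    then have "t1 + 1 - l < N" using assms t1_le by linarith
    then show ?thesis using play False unfolding valid_play_def rev_bin_def by simp
  qed
  then show ?thesis using alive_antimono[OF assms(3)] by blast
qed

text \<open>A bin removed at time \<open>t\<close> is no longer alive at any later time, where every earlier
\<open>B\<^sub>l\<close> is still alive.\<close>

lemma rev_bin_neq:
  assumes "1 \<le> l" and "l < l'" and "l' \<le> t1 + 1"
  shows "rev_bin t1 B1 rem l \<noteq> rev_bin t1 B1 rem l'"
proof -
  have "rev_bin t1 B1 rem l' = rem (t1 + 1 - l')"
    using assms by (simp add: rev_bin_def)
  then have "rev_bin t1 B1 rem l' \<notin> alive N rem (t1 + 1 - l)"
    using assms unfolding alive_def by auto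
  then show ?thesis
    using rev_bin_alive[of l "t1 + 1 - l"] assms by auto
qed

lemma inj_on_rev_bin:
  assumes "i \<le> t1 + 1"
  shows "inj_on (rev_bin t1 B1 rem) {1..i}"
proof (rule inj_onI)
  fix l l' assume "l \<in> {1..i}" "l' \<in> {1..i}" "rev_bin t1 B1 rem l = rev_bin t1 B1 rem l'"
  then show "l = l'"
    using rev_bin_neq[of l l'] rev_bin_neq[of l' l] assms by (cases l l' rule: linorder_cases) auto
qed

lemma sum_rev_bin_load_step:
  assumes "1 \<le> i" and "i < t1 + 1"
  shows "(\<Sum>l=1..i. load (t1 + 1 - i) (rev_bin t1 B1 rem l))
           \<le> (\<Sum>l=1..i. load (t1 - i) (rev_bin t1 B1 rem l)) + b"
    and "(\<Sum>l=1..i. load (t1 - i) (rev_bin t1 B1 rem l))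
           \<le> i * load (t1 - i) (rev_bin t1 B1 rem (Suc i))"
proof -
  let ?B = "rev_bin t1 B1 rem" and ?t = "t1 - i"
  have t: "t1 + 1 - i = Suc ?t" "?t < N" using assms t1_le by auto
  have J: "?B ` {1..i} \<subseteq> alive N rem (Suc ?t)"
    using assms by (auto simp flip: t(1) intro!: rev_bin_alive)
  have reindex: "(\<Sum>l=1..i. f (?B l)) = (\<Sum>j\<in>?B ` {1..i}. f j)" for f :: "nat \<Rightarrow> nat"
    using sum.reindex[OF inj_on_rev_bin, of i f] assms by simp
  show "(\<Sum>l=1..i. load (t1 + 1 - i) (?B l)) \<le> (\<Sum>l=1..i. load ?t (?B l)) + b"
    unfolding reindex t(1) by (rule sum_load_Suc_le[OF t(2) J])
  have "?B (Suc i) = rem ?t"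
    using assms by (simp add: rev_bin_def)
  moreover have "card (?B ` {1..i}) = i"
    using card_image[OF inj_on_rev_bin] assms by simp
  ultimately show "(\<Sum>l=1..i. load ?t (?B l)) \<le> i * load ?t (?B (Suc i))"
    unfolding reindex
    using sum_load_le_removed[OF t(2), of "?B ` {1..i}"] J alive_antimono[of ?t "Suc ?t" N rem]
    by auto
qed

end

end

theorem claimB1:
  fixes N b t1 B1 :: nat and k :: real
    and rem :: "nat \<Rightarrow> nat" and load :: "nat \<Rightarrow> nat \<Rightarrow> nat"
  assumes "N \<ge> 1" and "b \<ge> 1" and "k > 0"
    and "valid_play N b rem load"
    and "t1 \<le> N" and "B1 \<in> alive N rem t1" and "real (load t1 B1) \<ge> k"
  shows "\<forall>i. 1 \<le> i \<and> i \<le> t1 + 1 \<longrightarrow>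
           real (load (t1 + 1 - i) (rev_bin t1 B1 rem i)) \<ge> k - (\<Sum>l=1..i-1. real b / real l)
         \<and> (\<Sum>l=1..i. real (load (t1 + 1 - i) (rev_bin t1 B1 rem l)))
             \<ge> real i * (k - (\<Sum>l=1..i-1. real b / real l))"
proof (intro allI impI, elim conjE)
  fix i :: nat
  assume "1 \<le> i"
  define B where "B = rev_bin t1 B1 rem"
  define K where "K i = k - (\<Sum>l=1..i-1. real b / real l)" for i
  show "i \<le> t1 + 1 \<Longrightarrow> real (load (t1 + 1 - i) (B i)) \<ge> K i
          \<and> (\<Sum>l=1..i. real (load (t1 + 1 - i) (B l))) \<ge> real i * K i"
    using \<open>1 \<le> i\<close>
  proof (induction i rule: nat_induct_at_least)
    case base
    then show ?case using assms(7) by (simp add: B_def rev_bin_def K_def)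
  next
    case (Suc i)
    let ?S' = "\<Sum>l=1..i. real (load (t1 + 1 - i) (B l))"
      and ?S = "\<Sum>l=1..i. real (load (t1 - i) (B l))"
      and ?x = "real (load (t1 - i) (B (Suc i)))"
    note step = sum_rev_bin_load_step[OF assms(4,5,6) Suc.hyps(1)]
    have "?S' \<le> ?S + real b" and "?S \<le> real i * ?x"
      using Suc.prems step unfolding B_def by (simp_all flip: of_nat_sum of_nat_add of_nat_mult)
    moreover have "real i * K i \<le> ?S'"
      using Suc by simp
    moreover have "K (Suc i) = K i - real b / real i"
      using Suc.hyps by (cases i) (simp_all add: K_def)
    ultimately show ?case
      using averaging_step[of i ?S' ?S "real b" "K i" ?x] Suc.hyps Suc.prems by simp
  qed
qed

end
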